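(* Under the setting above, \begin{equation*} \sum_{k = 0}^{1 - a_{\eta\eta'}}(-1)^k\begin{bmatrix} 1 - a_{\eta\eta'} \\ k \end{bmatrix}_{d_{\eta}} \widetilde f_{\eta}^k\widetilde f_{\eta'} \widetilde f_{\eta}^{1-a_{\eta\eta'} - k} = 0 \end{equation*} in $\mathbf{U}_q^-$.
   Context: Let $X = (I, (\ ,\ ))$ be a Cartan datum with Cartan matrix $a_{ij} = 2(\alpha_i,\alpha_j)/(\alpha_i,\alpha_i)$, $d_i = (\alpha_i,\alpha_i)/2$, and let $\mathbf{U}_q^-$ be the $\mathbb{Q}(q)$-algebra generated by $f_i$ ($i \in I$) subject to the quantum Serre relations $\sum_{k=0}^{1-a_{ij}}(-1)^k\begin{bmatrix} 1 - a_{ij} \\ k\end{bmatrix}_{d_i} f_i^k f_j f_i^{1-a_{ij}-k} = 0$ ($i \ne j$), where $[n] = \frac{q^n - q^{-n}}{q - q^{-1}}$, $\begin{bmatrix} n \\ m\end{bmatrix} = \frac{[n]\cdots[n-m+1]}{[m]^!}$ and the subscript $d$ means $q$ is replaced by $q^d$. Let $\sigma$ be an admissible diagram automorphism of $X$ (a permutation of $I$ preserving $(\ ,\ )$ with $(\alpha_i,\alpha_j)=0$ for distinct $i,j$ in the same orbit), $\underline{I}$ the set of $\sigma$-orbits, and $\underline X$ the induced Cartan datum with $(\alpha_\eta,\alpha_\eta)_1 = (\alpha_i,\alpha_i)|\eta|$ ($i \in \eta$), $(\alpha_\eta,\alpha_{\eta'})_1 = \sum_{i\in\eta, j\in\eta'}(\alpha_i,\alpha_j)$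 for $\eta\ne\eta'$, $d_\eta = (\alpha_\eta,\alpha_\eta)_1/2$, $a_{\eta\eta'} = 2(\alpha_\eta,\alpha_{\eta'})_1/(\alpha_\eta,\alpha_\eta)_1$. Fix $\eta \ne \eta' \in \underline{I}$ with $\eta = \{i\}$ a single element and $|\eta'| = n-1$, such that every $j \in \eta'$ is joined to $i$ (i.e. $a_{ij} \ne 0$), with $a_{ij}$ independent of $j \in \eta'$; set $r = 1 - a_{ij}$, so $1 - a_{\eta\eta'} = (n-1)(r-1)+1$ and $d_\eta = d_i$. Put $\widetilde f_\eta = f_i$ and $\widetilde f_{\eta'} = \prod_{j \in \eta'} f_j$. *)

theory Defs
  imports "HOL-Library.Function_Algebras" "HOL-Computational_Algebra.Polynomial" "HOL-Computational_Algebra.Fraction_Field"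
begin

type_synonym Qq = "rat poly fract"

definition qv :: Qq where "qv = Fract [:0, 1:] 1"

definition qint :: "nat \<Rightarrow> nat \<Rightarrow> Qq" where
  "qint d n = (qv ^ (d * n) - inverse qv ^ (d * n)) / (qv ^ d - inverse qv ^ d)"

definition qfact :: "nat \<Rightarrow> nat \<Rightarrow> Qq" where
  "qfact d m = (\<Prod>l = 1..m. qint d l)"

definition qbinom :: "nat \<Rightarrow> nat \<Rightarrow> nat \<Rightarrow> Qq" where
  "qbinom d n m = (\<Prod>l = 0..<m. qint d (n - l)) / qfact d m"

text \<open>The symmetric bilinear form is given by its values B i j = (alpha_i, alpha_j).\<close>
definition cartan_datum :: "('i::finite \<Rightarrow> 'i \<Rightarrow> int) \<Rightarrow> bool" where
  "cartan_datum B \<longleftrightarrow> (\<forall>i j. B i j = B j i) \<and> (\<forall>i. B i i > 0 \<and> even (B i i))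
     \<and> (\<forall>i j. i \<noteq> j \<longrightarrow> B i j \<le> 0 \<and> B i i dvd 2 * B i j)"

definition cartan_a :: "('i \<Rightarrow> 'i \<Rightarrow> int) \<Rightarrow> 'i \<Rightarrow> 'i \<Rightarrow> int" where
  "cartan_a B i j = (2 * B i j) div B i i"

definition cartan_d :: "('i \<Rightarrow> 'i \<Rightarrow> int) \<Rightarrow> 'i \<Rightarrow> int" where
  "cartan_d B i = B i i div 2"

text \<open>Elements of the free algebra Q(q)<f_i> are represented as coefficient functions on
  words (finitely supported); the word [i1,...,im] stands for f_{i1} ... f_{im}.\<close>
type_synonym 'i ncp = "'i list \<Rightarrow> Qq"

definition mon :: "'i list \<Rightarrow> 'i ncp" where
  "mon w = (\<lambda>v. if v = w then 1 else 0)"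

definition smult_ncp :: "Qq \<Rightarrow> 'i ncp \<Rightarrow> 'i ncp" where
  "smult_ncp c p = (\<lambda>w. c * p w)"

definition lmul_word :: "'i list \<Rightarrow> 'i ncp \<Rightarrow> 'i ncp" where
  "lmul_word u p = (\<lambda>w. if take (length u) w = u then p (drop (length u) w) else 0)"

definition rmul_word :: "'i list \<Rightarrow> 'i ncp \<Rightarrow> 'i ncp" where
  "rmul_word v p = (\<lambda>w. if length v \<le> length w \<and> drop (length w - length v) w = v
                         then p (take (length w - length v) w) else 0)"

definition serre_elem :: "('i \<Rightarrow> 'i \<Rightarrow> int) \<Rightarrow> 'i \<Rightarrow> 'i \<Rightarrow> 'i ncp" where
  "serre_elem B i j =
     (let N = nat (1 - cartan_a B i j); d = nat (cartan_d B i) in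
      (\<Sum>k = 0..N. smult_ncp ((-1) ^ k * qbinom d N k)
                      (mon (replicate k i @ [j] @ replicate (N - k) i))))"

inductive_set serre_ideal :: "('i \<Rightarrow> 'i \<Rightarrow> int) \<Rightarrow> 'i ncp set" for B where
  gen: "i \<noteq> j \<Longrightarrow> serre_elem B i j \<in> serre_ideal B"
| zero: "(\<lambda>_. 0) \<in> serre_ideal B"
| add: "p \<in> serre_ideal B \<Longrightarrow> r \<in> serre_ideal B \<Longrightarrow> (\<lambda>w. p w + r w) \<in> serre_ideal B"
| smult: "p \<in> serre_ideal B \<Longrightarrow> smult_ncp c p \<in> serre_ideal B"
| lmul: "p \<in> serre_ideal B \<Longrightarrow> lmul_word u p \<in> serre_ideal B"
| rmul: "p \<in> serre_ideal B \<Longrightarrow> rmul_word v p \<in> serre_ideal B"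

definition zero_in_Uminus :: "('i \<Rightarrow> 'i \<Rightarrow> int) \<Rightarrow> 'i ncp \<Rightarrow> bool" where
  "zero_in_Uminus B p \<longleftrightarrow> p \<in> serre_ideal B"

definition admissible_aut :: "('i::finite \<Rightarrow> 'i \<Rightarrow> int) \<Rightarrow> ('i \<Rightarrow> 'i) \<Rightarrow> bool" where
  "admissible_aut B \<sigma> \<longleftrightarrow> bij \<sigma> \<and> (\<forall>i j. B (\<sigma> i) (\<sigma> j) = B i j)
     \<and> (\<forall>i k. (\<sigma> ^^ k) i \<noteq> i \<longrightarrow> B i ((\<sigma> ^^ k) i) = 0)"

definition sorbit :: "('i \<Rightarrow> 'i) \<Rightarrow> 'i \<Rightarrow> 'i set" where
  "sorbit \<sigma> i = {(\<sigma> ^^ k) i | k. True}"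

definition sorbits :: "('i \<Rightarrow> 'i) \<Rightarrow> 'i set set" where
  "sorbits \<sigma> = range (sorbit \<sigma>)"

definition B1 :: "('i \<Rightarrow> 'i \<Rightarrow> int) \<Rightarrow> 'i set \<Rightarrow> 'i set \<Rightarrow> int" where
  "B1 B \<eta> \<eta>' = (if \<eta> = \<eta>' then (let i = (SOME i. i \<in> \<eta>) in B i i * int (card \<eta>))
                   else (\<Sum>i\<in>\<eta>. \<Sum>j\<in>\<eta>'. B i j))"

definition d1 :: "('i \<Rightarrow> 'i \<Rightarrow> int) \<Rightarrow> 'i set \<Rightarrow> int" where
  "d1 B \<eta> = B1 B \<eta> \<eta> div 2"

definition a1 :: "('i \<Rightarrow> 'i \<Rightarrow> int) \<Rightarrow> 'i set \<Rightarrow> 'i set \<Rightarrow> int" where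
  "a1 B \<eta> \<eta>' = (2 * B1 B \<eta> \<eta>') div B1 B \<eta> \<eta>"

end

theory Submission
  imports Defs
begin

text \<open>Write Y = f_i and let the twisted commutator with twist c send p to p Y - q_i^c Y p.
  Iterating it n times, with the twist starting at 1 - n and growing by 2 at each step, sends a
  word u to the quantum Serre combination of the words Y^k u Y^(n-k). So with s = -a_ij, the
  Serre relation for (i, j) says that s + 1 iterated commutators kill f_j modulo the Serre ideal.
  The twisted commutator obeys a Leibniz rule in which the twists add, so the n-th iterate on x z
  is a combination of products of the a-th iterate on x and the b-th iterate on z with a + b = n:
  if s_1 + 1 iterates kill x and s_2 + 1 kill z, then s_1 + s_2 + 1 kill x z. For the word
  f_(j_1) ... f_(j_m) this gives m s + 1 = 1 - a_(eta eta') iterates.\<close>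

section \<open>Quantum numbers\<close>

definition qnum :: "'k::field \<Rightarrow> nat \<Rightarrow> 'k" where
  "qnum w n = (w ^ n - inverse w ^ n) / (w - inverse w)"

definition qbin :: "'k::field \<Rightarrow> nat \<Rightarrow> nat \<Rightarrow> 'k" where
  "qbin w n m = (\<Prod>l = 0..<m. qnum w (n - l)) / (\<Prod>l = 1..m. qnum w l)"

lemma qint_eq_qnum: "qint d n = qnum (qv ^ d) n"
  unfolding qint_def qnum_def by (simp add: power_mult power_inverse)

lemma qbinom_eq_qbin: "qbinom d n m = qbin (qv ^ d) n m"
  unfolding qbinom_def qbin_def qfact_def qint_eq_qnum ..

lemma qnum_0 [simp]: "qnum w 0 = 0"
  by (simp add: qnum_def)

lemma qbin_0 [simp]: "qbin w n 0 = 1"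
  by (simp add: qbin_def)

lemma qbin_eq_0: "n < m \<Longrightarrow> qbin w n m = 0"
  unfolding qbin_def by (subst prod_zero_iff[THEN iffD2]) (auto intro!: bexI[of _ n])

lemma qnum_Suc_add: "qnum w (Suc (k + t)) = inverse w ^ Suc k * qnum w t + w ^ t * qnum w (Suc k)"
  unfolding qnum_def by (simp add: power_add algebra_simps diff_divide_distrib add_divide_distrib)

lemma qbin_Suc_Suc:
  assumes "w \<noteq> 0" and qnum_nz: "\<And>k. k \<ge> 1 \<Longrightarrow> qnum w k \<noteq> 0"
  shows "qbin w (Suc n) (Suc k) =
    w powi (- int (Suc k)) * qbin w n (Suc k) + w powi (int n - int k) * qbin w n k"
proof -
  define P where "P = (\<Prod>l<k. qnum w (n - l))"
  define F where "F = (\<Prod>l = 1..k. qnum w l)"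
  have "F \<noteq> 0" "qnum w (Suc k) \<noteq> 0"
    using qnum_nz by (auto simp: F_def prod_zero_iff)
  have F_Suc: "(\<Prod>l = 1..Suc k. qnum w l) = F * qnum w (Suc k)"
    unfolding F_def by (simp add: prod.cl_ivl_Suc)
  have lhs: "qbin w (Suc n) (Suc k) = qnum w (Suc n) * P / (F * qnum w (Suc k))"
    unfolding qbin_def F_Suc P_def atLeast0LessThan prod.lessThan_Suc_shift by simp
  have rhs1: "qbin w n (Suc k) = P * qnum w (n - k) / (F * qnum w (Suc k))"
    unfolding qbin_def F_Suc P_def atLeast0LessThan prod.lessThan_Suc by simp
  have rhs2: "qbin w n k = P / F"
    unfolding qbin_def F_def P_def atLeast0LessThan by simp
  show ?thesis
  proof (cases "k \<le> n")
    case True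
    then obtain t where t: "n = k + t" by (metis le_add_diff_inverse)
    have "w powi (- int (Suc k)) = inverse w ^ Suc k"
      by (simp only: power_int_minus power_int_of_nat power_inverse)
    moreover have "w powi (int n - int k) = w ^ t"
      using t by simp
    moreover have "qnum w (Suc n) = inverse w ^ Suc k * qnum w (n - k) + w ^ t * qnum w (Suc k)"
      using qnum_Suc_add[of w k t] t by simp
    ultimately show ?thesis
      unfolding lhs rhs1 rhs2 using \<open>F \<noteq> 0\<close> \<open>qnum w (Suc k) \<noteq> 0\<close> by (simp add: field_simps)
  next
    case False
    then have "P = 0" unfolding P_def by (auto simp: prod_zero_iff intro!: bexI[of _ n])
    then show ?thesis unfolding lhs rhs1 rhs2 by simp
  qed
qed

definition twisted_qbin :: "'k::field \<Rightarrow> int \<Rightarrow> nat \<Rightarrow> nat \<Rightarrow> 'k" where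
  "twisted_qbin w c n k = (-1) ^ k * w powi (int k * (c + int n - 1)) * qbin w n k"

lemma twisted_qbin_0 [simp]: "twisted_qbin w c n 0 = 1"
  by (simp add: twisted_qbin_def)

lemma twisted_qbin_eq_0: "n < k \<Longrightarrow> twisted_qbin w c n k = 0"
  by (simp add: twisted_qbin_def qbin_eq_0)

lemma twisted_qbin_Suc_Suc:
  assumes "w \<noteq> 0" and "\<And>k. k \<ge> 1 \<Longrightarrow> qnum w k \<noteq> 0"
  shows "twisted_qbin w c (Suc n) (Suc k) =
    twisted_qbin w c n (Suc k) - w powi (c + 2 * int n) * twisted_qbin w c n k"
proof -
  define E where "E = int (Suc k) * (c + int n)"
  have E1: "w powi E * w powi (- int (Suc k)) = w powi (int (Suc k) * (c + int n - 1))"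
    using \<open>w \<noteq> 0\<close> by (simp add: E_def algebra_simps flip: power_int_add)
  have E2: "w powi E * w powi (int n - int k) =
      w powi (c + 2 * int n) * w powi (int k * (c + int n - 1))"
    using \<open>w \<noteq> 0\<close> by (simp add: E_def algebra_simps flip: power_int_add)
  have "twisted_qbin w c (Suc n) (Suc k) = (-1) ^ Suc k * w powi E * qbin w (Suc n) (Suc k)"
    by (simp add: twisted_qbin_def E_def)
  also have "\<dots> = (-1) ^ Suc k * ((w powi E * w powi (- int (Suc k))) * qbin w n (Suc k)
      + (w powi E * w powi (int n - int k)) * qbin w n k)"
    using qbin_Suc_Suc[OF assms, of n k] by (simp add: algebra_simps)
  also have "\<dots> = twisted_qbin w c n (Suc k) - w powi (c + 2 * int n) * twisted_qbin w c n k"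
    unfolding E1 E2 by (simp add: twisted_qbin_def algebra_simps)
  finally show ?thesis .
qed

lemma qv_power: "qv ^ m = Fract ([:0, 1:] ^ m) 1"
  by (induction m) (simp_all add: qv_def mult_fract One_fract_def)

lemma qv_power_neq_1: "m \<ge> 1 \<Longrightarrow> qv ^ m \<noteq> 1"
proof
  assume "m \<ge> 1" and "qv ^ m = 1"
  then have "([:0, 1:] ^ m :: rat poly) = 1"
    by (simp add: qv_power One_fract_def eq_fract)
  then have "degree ([:0, 1:] ^ m :: rat poly) = 0" by simp
  with \<open>m \<ge> 1\<close> show False by (simp add: degree_linear_power)
qed

lemma qv_neq_0: "qv \<noteq> 0"
  by (simp add: qv_def Zero_fract_def eq_fract)

lemma qnum_qv_power_neq_0:
  assumes "d \<ge> 1" and "k \<ge> 1"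
  shows "qnum (qv ^ d) k \<noteq> 0"
proof -
  have "(qv ^ d) ^ l \<noteq> inverse (qv ^ d) ^ l" if "l \<ge> 1" for l
  proof
    assume "(qv ^ d) ^ l = inverse (qv ^ d) ^ l"
    then have "(qv ^ d) ^ l * (qv ^ d) ^ l = (inverse (qv ^ d) * qv ^ d) ^ l"
      by (simp add: power_mult_distrib)
    then have "qv ^ (d * l + d * l) = 1"
      using qv_neq_0 by (simp add: power_add power_mult)
    moreover have "d * l + d * l \<ge> 1" using assms that by (simp add: Suc_le_eq)
    ultimately show False using qv_power_neq_1 by blast
  qed
  from this[of 1] this[OF \<open>k \<ge> 1\<close>] show ?thesis
    by (simp add: qnum_def)
qed

section \<open>Twisted commutators\<close>

locale central_scalars =
  fixes sc :: "'k::field \<Rightarrow> 'a::ring_1"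
  assumes sc_add: "sc (x + y) = sc x + sc y"
    and sc_mult: "sc (x * y) = sc x * sc y"
    and sc_one: "sc 1 = 1"
    and sc_central: "sc x * p = p * sc x"
begin

lemma sc_zero: "sc 0 = 0"
  using sc_add[of 0 0] by simp

lemma sc_uminus: "sc (- x) = - sc x"
  using sc_add[of x "- x"] by (simp add: sc_zero eq_neg_iff_add_eq_0 add.commute)

lemma sc_diff: "sc (x - y) = sc x - sc y"
  using sc_add[of x "- y"] by (simp add: sc_uminus)

lemma sc_mult_left_commute: "p * (sc x * q) = sc x * (p * q)"
  by (metis sc_central mult.assoc)

definition qcomm :: "'k \<Rightarrow> 'a \<Rightarrow> int \<Rightarrow> 'a \<Rightarrow> 'a" where
  "qcomm w Y c p = p * Y - sc (w powi c) * Y * p"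

primrec qcomm_iter :: "'k \<Rightarrow> 'a \<Rightarrow> int \<Rightarrow> nat \<Rightarrow> 'a \<Rightarrow> 'a" where
  "qcomm_iter w Y c 0 p = p"
| "qcomm_iter w Y c (Suc n) p = qcomm w Y (c + 2 * int n) (qcomm_iter w Y c n p)"

lemma qcomm_add: "qcomm w Y c (p + q) = qcomm w Y c p + qcomm w Y c q"
  by (simp add: qcomm_def algebra_simps)

lemma qcomm_0 [simp]: "qcomm w Y c 0 = 0"
  by (simp add: qcomm_def)

lemma qcomm_sc: "qcomm w Y c (sc k * p) = sc k * qcomm w Y c p"
proof -
  have "sc (w powi c) * Y * (sc k * p) = sc k * (sc (w powi c) * Y * p)"
    by (metis sc_central mult.assoc)
  then show ?thesis
    unfolding qcomm_def by (simp add: right_diff_distrib mult.assoc)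
qed

lemma qcomm_mult:
  assumes "w \<noteq> 0"
  shows "qcomm w Y (c1 + c2) (p * z) = p * qcomm w Y c2 z + sc (w powi c2) * (qcomm w Y c1 p * z)"
proof -
  have "sc (w powi (c1 + c2)) = sc (w powi c2) * sc (w powi c1)"
    using assms by (simp add: power_int_add mult.commute flip: sc_mult)
  then have "sc (w powi (c1 + c2)) * Y * (p * z) = sc (w powi c2) * (sc (w powi c1) * Y * p * z)"
    by (simp add: mult.assoc)
  moreover have "p * (sc (w powi c2) * Y * z) = sc (w powi c2) * (p * Y * z)"
    by (metis sc_central mult.assoc)
  ultimately show ?thesis
    unfolding qcomm_def right_diff_distrib left_diff_distrib by (simp add: mult.assoc)
qed

lemma qcomm_iter_add: "qcomm_iter w Y c (n + m) p = qcomm_iter w Y (c + 2 * int n) m (qcomm_iter w Y c n p)"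
  by (induction m) (auto simp: algebra_simps)

lemma qcomm_iter_0 [simp]: "qcomm_iter w Y c n 0 = 0"
  by (induction n) auto

lemma qcomm_iter_1:
  assumes "n \<ge> 1"
  shows "qcomm_iter w Y 0 n 1 = 0"
proof -
  obtain t where "n = 1 + t" using assms by (metis le_add_diff_inverse)
  moreover have "qcomm_iter w Y 0 1 1 = 0" by (simp add: qcomm_def sc_one)
  ultimately show ?thesis by (simp only: qcomm_iter_add qcomm_iter_0)
qed


lemma qcomm_sum_monomials:
  assumes "\<alpha> (Suc n) = 0"
  shows "qcomm w Y e (\<Sum>k\<le>n. sc (\<alpha> k) * (Y ^ k * p * Y ^ (n - k))) =
    (\<Sum>k\<le>Suc n. sc (case k of 0 \<Rightarrow> \<alpha> 0 | Suc l \<Rightarrow> \<alpha> (Suc l) - w powi e * \<alpha> l)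
      * (Y ^ k * p * Y ^ (Suc n - k)))"
proof -
  define f where "f k = sc (\<alpha> k) * (Y ^ k * p * Y ^ (Suc n - k))" for k
  define g where "g k = sc (w powi e * \<alpha> k) * (Y ^ Suc k * p * Y ^ (n - k))" for k
  have right: "(\<Sum>k\<le>n. sc (\<alpha> k) * (Y ^ k * p * Y ^ (n - k))) * Y = (\<Sum>k\<le>n. f k)"
    unfolding sum_distrib_right f_def
    by (intro sum.cong refl) (simp add: mult.assoc Suc_diff_le flip: power_Suc2)
  have left: "sc (w powi e) * Y * (\<Sum>k\<le>n. sc (\<alpha> k) * (Y ^ k * p * Y ^ (n - k))) = (\<Sum>k\<le>n. g k)"
    unfolding sum_distrib_left
  proof (intro sum.cong refl)
    fix k
    have "Y * (sc (\<alpha> k) * (Y ^ k * p * Y ^ (n - k))) = sc (\<alpha> k) * (Y ^ Suc k * p * Y ^ (n - k))"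
      by (simp add: sc_mult_left_commute mult.assoc)
    then show "sc (w powi e) * Y * (sc (\<alpha> k) * (Y ^ k * p * Y ^ (n - k))) = g k"
      by (simp add: g_def sc_mult mult.assoc)
  qed
  have "(\<Sum>k\<le>n. f k) = (\<Sum>k\<le>Suc n. f k)"
    using assms by (simp add: f_def sc_zero)
  also have "\<dots> = f 0 + (\<Sum>k\<le>n. f (Suc k))"
    by (rule sum.atMost_Suc_shift)
  finally have "(\<Sum>k\<le>n. f k) - (\<Sum>k\<le>n. g k) = f 0 + (\<Sum>k\<le>n. f (Suc k) - g k)"
    by (simp add: sum_subtractf)
  also have "\<dots> = (\<Sum>k\<le>Suc n. sc (case k of 0 \<Rightarrow> \<alpha> 0 | Suc l \<Rightarrow> \<alpha> (Suc l) - w powi e * \<alpha> l)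
      * (Y ^ k * p * Y ^ (Suc n - k)))"
    unfolding sum.atMost_Suc_shift[where n = n] by (simp add: f_def g_def sc_diff left_diff_distrib)
  finally show ?thesis
    by (simp add: qcomm_def right left)
qed

lemma qcomm_iter_closed_form:
  assumes "w \<noteq> 0" and "\<And>k. k \<ge> 1 \<Longrightarrow> qnum w k \<noteq> 0"
  shows "qcomm_iter w Y c n p = (\<Sum>k\<le>n. sc (twisted_qbin w c n k) * (Y ^ k * p * Y ^ (n - k)))"
proof (induction n)
  case 0
  then show ?case by (simp add: sc_one)
next
  case (Suc n)
  have "(case k of 0 \<Rightarrow> twisted_qbin w c n 0
      | Suc l \<Rightarrow> twisted_qbin w c n (Suc l) - w powi (c + 2 * int n) * twisted_qbin w c n l)
      = twisted_qbin w c (Suc n) k" for k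
    by (cases k) (simp_all add: twisted_qbin_Suc_Suc[OF assms])
  then show ?case
    by (simp add: Suc qcomm_sum_monomials twisted_qbin_eq_0)
qed

inductive_set prod_iter_span :: "'k \<Rightarrow> 'a \<Rightarrow> int \<Rightarrow> int \<Rightarrow> 'a \<Rightarrow> 'a \<Rightarrow> nat \<Rightarrow> 'a set"
  for w Y c1 c2 x z n where
  prod: "a + b = n \<Longrightarrow>
    sc k * (qcomm_iter w Y c1 a x * qcomm_iter w Y c2 b z) \<in> prod_iter_span w Y c1 c2 x z n"
| zero: "0 \<in> prod_iter_span w Y c1 c2 x z n"
| add: "s \<in> prod_iter_span w Y c1 c2 x z n \<Longrightarrow> t \<in> prod_iter_span w Y c1 c2 x z n \<Longrightarrow>
    s + t \<in> prod_iter_span w Y c1 c2 x z n"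

lemma qcomm_prod_iter_span:
  assumes "w \<noteq> 0" and "s \<in> prod_iter_span w Y c1 c2 x z n"
  shows "qcomm w Y (c1 + c2 + 2 * int n) s \<in> prod_iter_span w Y c1 c2 x z (Suc n)"
  using assms(2)
proof induction
  case (prod a b k)
  have split: "c1 + c2 + 2 * int n = (c1 + 2 * int a) + (c2 + 2 * int b)"
    using prod by simp
  have "qcomm w Y (c1 + c2 + 2 * int n) (sc k * (qcomm_iter w Y c1 a x * qcomm_iter w Y c2 b z))
     = sc k * (qcomm_iter w Y c1 a x * qcomm_iter w Y c2 (Suc b) z)
       + sc (k * w powi (c2 + 2 * int b)) * (qcomm_iter w Y c1 (Suc a) x * qcomm_iter w Y c2 b z)"
    unfolding qcomm_sc split qcomm_mult[OF assms(1)] by (simp add: sc_mult algebra_simps)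
  also have "\<dots> \<in> prod_iter_span w Y c1 c2 x z (Suc n)"
    using prod by (intro prod_iter_span.add prod_iter_span.prod) auto
  finally show ?case .
qed (auto simp: qcomm_add intro: prod_iter_span.intros)

lemma qcomm_iter_mult_mem_prod_iter_span:
  assumes "w \<noteq> 0"
  shows "qcomm_iter w Y (c1 + c2) n (x * z) \<in> prod_iter_span w Y c1 c2 x z n"
proof (induction n)
  case 0
  have "sc 1 * (qcomm_iter w Y c1 0 x * qcomm_iter w Y c2 0 z) \<in> prod_iter_span w Y c1 c2 x z 0"
    by (rule prod_iter_span.prod) simp
  then show ?case by (simp add: sc_one)
next
  case (Suc n)
  then show ?case
    using qcomm_prod_iter_span[OF assms Suc] by (simp add: algebra_simps)
qed

lemma prod_iter_span_subset:
  assumes "0 \<in> S" and "\<And>s t. s \<in> S \<Longrightarrow> t \<in> S \<Longrightarrow> s + t \<in> S"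
    and "\<And>k s. s \<in> S \<Longrightarrow> sc k * s \<in> S"
    and "\<And>a b. a + b = n \<Longrightarrow> qcomm_iter w Y c1 a x * qcomm_iter w Y c2 b z \<in> S"
  shows "prod_iter_span w Y c1 c2 x z n \<subseteq> S"
proof
  fix s assume "s \<in> prod_iter_span w Y c1 c2 x z n"
  then show "s \<in> S" by induction (auto intro: assms)
qed

end

section \<open>Noncommutative power series over Q(q)\<close>

definition word_conv :: "'i ncp \<Rightarrow> 'i ncp \<Rightarrow> 'i ncp" where
  "word_conv p q = (\<lambda>w. \<Sum>k\<le>length w. p (take k w) * q (drop k w))"

lemma word_conv_assoc: "word_conv (word_conv p q) r = word_conv p (word_conv q r)"
proof
  fix w :: "'a list"
  define n where "n = length w"
  define g where "g l m = p (take l w) * q (take m (drop l w)) * r (drop (l + m) w)" for l m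
  have "word_conv (word_conv p q) r w = (\<Sum>k\<le>n. \<Sum>l\<le>k. g l (k - l))"
    unfolding word_conv_def n_def g_def
    by (auto simp: sum_distrib_right min_def drop_take intro!: sum.cong)
  also have "\<dots> = (\<Sum>(l, m)\<in>{(l, m). l + m \<le> n}. g l m)"
    by (rule sum.triangle_reindex_eq[symmetric])
  also have "{(l, m). l + m \<le> n} = Sigma {..n} (\<lambda>l. {..n - l})"
    by auto
  also have "(\<Sum>(l, m)\<in>Sigma {..n} (\<lambda>l. {..n - l}). g l m) = (\<Sum>l\<le>n. \<Sum>m\<le>n - l. g l m)"
    by (rule sum.Sigma[symmetric]) auto
  also have "\<dots> = word_conv p (word_conv q r) w"
    unfolding word_conv_def n_def g_def
    by (auto simp: sum_distrib_left mult.assoc add.commute intro!: sum.cong)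
  finally show "word_conv (word_conv p q) r w = word_conv p (word_conv q r) w" .
qed

lemma word_conv_mon_left: "word_conv (mon u) p = lmul_word u p"
proof
  fix w :: "'a list"
  have "word_conv (mon u) p w = (\<Sum>k\<le>length w. if k = length u then
      (if take (length u) w = u then p (drop (length u) w) else 0) else 0)"
    unfolding word_conv_def mon_def by (intro sum.cong) auto
  also have "\<dots> = lmul_word u p w"
    by (auto simp: lmul_word_def dest: arg_cong[of _ _ length])
  finally show "word_conv (mon u) p w = lmul_word u p w" .
qed

lemma word_conv_mon_right: "word_conv p (mon v) = rmul_word v p"
proof
  fix w :: "'a list"
  have "word_conv p (mon v) w = (\<Sum>k\<le>length w. if k = length w - length v then
      (if length v \<le> length w \<and> drop (length w - length v) w = v
       then p (take (length w - length v) w) else 0) else 0)"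
    unfolding word_conv_def mon_def by (intro sum.cong) auto
  also have "\<dots> = rmul_word v p w"
    by (auto simp: rmul_word_def)
  finally show "word_conv p (mon v) w = rmul_word v p w" .
qed

lemma lmul_word_Nil: "lmul_word [] p = p"
  by (simp add: lmul_word_def)

lemma rmul_word_Nil: "rmul_word [] p = p"
  by (simp add: rmul_word_def)

typedef 'i nc_series = "UNIV :: 'i ncp set"
  morphisms ncs_coeff Abs_nc_series by simp

setup_lifting type_definition_nc_series

instantiation nc_series :: (type) ring_1
begin

lift_definition zero_nc_series :: "'i nc_series" is "\<lambda>_. 0" .
lift_definition one_nc_series :: "'i nc_series" is "mon []" .
lift_definition plus_nc_series :: "'i nc_series \<Rightarrow> 'i nc_series \<Rightarrow> 'i nc_series" is "\<lambda>p q w. p w + q w" .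
lift_definition minus_nc_series :: "'i nc_series \<Rightarrow> 'i nc_series \<Rightarrow> 'i nc_series" is "\<lambda>p q w. p w - q w" .
lift_definition uminus_nc_series :: "'i nc_series \<Rightarrow> 'i nc_series" is "\<lambda>p w. - p w" .
lift_definition times_nc_series :: "'i nc_series \<Rightarrow> 'i nc_series \<Rightarrow> 'i nc_series" is word_conv .

instance
proof
  fix a b c :: "'i nc_series"
  show "a * b * c = a * (b * c)" by transfer (rule word_conv_assoc)
  show "a + b + c = a + (b + c)" by transfer (simp add: add.assoc)
  show "a + b = b + a" by transfer (simp add: add.commute)
  show "0 + a = a" by transfer simp
  show "- a + a = 0" by transfer simp
  show "a - b = a + - b" by transfer simp
  show "1 * a = a" by transfer (simp add: word_conv_mon_left lmul_word_Nil)
  show "a * 1 = a" by transfer (simp add: word_conv_mon_right rmul_word_Nil)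
  show "(a + b) * c = a * c + b * c" by transfer (auto simp: word_conv_def distrib_right sum.distrib)
  show "a * (b + c) = a * b + a * c" by transfer (auto simp: word_conv_def distrib_left sum.distrib)
  show "(0::'i nc_series) \<noteq> 1" by transfer (auto simp: mon_def fun_eq_iff)
qed

end

definition ncs_const :: "Qq \<Rightarrow> 'i nc_series" where
  "ncs_const c = Abs_nc_series (\<lambda>w. if w = [] then c else 0)"

lemma ncs_coeff_const: "ncs_coeff (ncs_const c) = (\<lambda>w. if w = [] then c else 0)"
  by (simp add: ncs_const_def Abs_nc_series_inverse)

lift_definition ncs_word :: "'i list \<Rightarrow> 'i nc_series" is mon .

lemma ncs_coeff_sum: "ncs_coeff (\<Sum>x\<in>A. f x) = (\<Sum>x\<in>A. ncs_coeff (f x))"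
  by (induction A rule: infinite_finite_induct) (auto simp: zero_nc_series.rep_eq plus_nc_series.rep_eq)

lemma ncs_coeff_const_mult: "ncs_coeff (ncs_const c * p) = smult_ncp c (ncs_coeff p)"
proof
  fix w :: "'a list"
  have "ncs_coeff (ncs_const c * p) w = (\<Sum>k\<le>length w. if k = 0 then c * ncs_coeff p w else 0)"
    unfolding times_nc_series.rep_eq word_conv_def ncs_coeff_const by (intro sum.cong) auto
  then show "ncs_coeff (ncs_const c * p) w = smult_ncp c (ncs_coeff p) w"
    by (simp add: smult_ncp_def)
qed

lemma ncs_coeff_mult_const: "ncs_coeff (p * ncs_const c) = smult_ncp c (ncs_coeff p)"
proof
  fix w :: "'a list"
  have "ncs_coeff (p * ncs_const c) w = (\<Sum>k\<le>length w. if k = length w then c * ncs_coeff p w else 0)"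
    unfolding times_nc_series.rep_eq word_conv_def ncs_coeff_const
    by (intro sum.cong) (auto simp: mult.commute)
  then show "ncs_coeff (p * ncs_const c) w = smult_ncp c (ncs_coeff p) w"
    by (simp add: smult_ncp_def)
qed

lemma ncs_coeff_word_mult: "ncs_coeff (ncs_word u * p) = lmul_word u (ncs_coeff p)"
  by transfer (rule word_conv_mon_left)

lemma ncs_coeff_mult_word: "ncs_coeff (p * ncs_word v) = rmul_word v (ncs_coeff p)"
  by transfer (rule word_conv_mon_right)

lemma ncs_word_Nil: "ncs_word [] = 1"
  by transfer simp

lemma ncs_word_append: "ncs_word (u @ v) = ncs_word u * ncs_word v"
  by (rule ncs_coeff_inject[THEN iffD1])
    (auto simp: ncs_coeff_word_mult ncs_word.rep_eq lmul_word_def mon_def fun_eq_iff,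
      metis append_take_drop_id)

lemma ncs_word_eq_prod_list: "ncs_word u = prod_list (map (\<lambda>j. ncs_word [j]) u)"
proof (induction u)
  case Nil
  show ?case by (simp add: ncs_word_Nil)
next
  case (Cons j u)
  then show ?case using ncs_word_append[of "[j]" u] by simp
qed

interpretation ncs: central_scalars "ncs_const :: Qq \<Rightarrow> 'i nc_series"
proof
  fix x y :: Qq and p :: "'i nc_series"
  show "ncs_const (x + y) = ncs_const x + ncs_const y"
    by (rule ncs_coeff_inject[THEN iffD1]) (auto simp: plus_nc_series.rep_eq ncs_coeff_const)
  show "ncs_const (x * y) = (ncs_const x * ncs_const y :: 'i nc_series)"
    by (rule ncs_coeff_inject[THEN iffD1])
      (auto simp: ncs_coeff_const_mult smult_ncp_def fun_eq_iff ncs_coeff_const)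
  show "ncs_const 1 = (1 :: 'i nc_series)"
    by (rule ncs_coeff_inject[THEN iffD1]) (auto simp: one_nc_series.rep_eq ncs_coeff_const mon_def)
  show "ncs_const x * p = p * ncs_const x"
    by (rule ncs_coeff_inject[THEN iffD1]) (simp add: ncs_coeff_const_mult ncs_coeff_mult_const)
qed

lemma cartan_d_ge_1: "cartan_datum B \<Longrightarrow> cartan_d B i \<ge> 1"
  by (auto simp: cartan_datum_def cartan_d_def elim!: allE[of _ i] evenE)

lemma cartan_a_nonpos:
  assumes "cartan_datum B" and "i \<noteq> j"
  shows "cartan_a B i j \<le> 0"
proof -
  have "B i i > 0" and "2 * B i j \<le> 0" using assms by (auto simp: cartan_datum_def)
  then show ?thesis unfolding cartan_a_def by (simp add: div_nonpos_pos_le0)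
qed

lemma cartan_a_mult_diag:
  assumes "cartan_datum B" and "i \<noteq> j"
  shows "cartan_a B i j * B i i = 2 * B i j"
  using assms by (simp add: cartan_datum_def cartan_a_def)

lemma sorbit_refl: "i \<in> sorbit \<sigma> i"
  unfolding sorbit_def by (auto intro: exI[of _ 0])

lemma sorbit_step: "\<sigma> i \<in> sorbit \<sigma> i"
  unfolding sorbit_def by (auto intro: exI[of _ 1])

lemma fixed_point_mem_sorbit:
  assumes "inj \<sigma>" and "\<sigma> i = i" and "i \<in> sorbit \<sigma> j"
  shows "j = i"
proof -
  obtain k where k: "i = (\<sigma> ^^ k) j" using assms(3) by (auto simp: sorbit_def)
  have "(\<sigma> ^^ k) i = i" by (induction k) (simp_all add: assms(2))
  with k have "(\<sigma> ^^ k) j = (\<sigma> ^^ k) i" by simp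
  then show ?thesis using inj_fn[OF assms(1)] by (simp add: inj_eq)
qed

lemma singleton_sorbit_disjoint:
  assumes "inj \<sigma>" and "{i} \<in> sorbits \<sigma>" and "\<eta>' \<in> sorbits \<sigma>" and "\<eta>' \<noteq> {i}"
  shows "i \<notin> \<eta>'"
proof
  assume "i \<in> \<eta>'"
  obtain i0 where i0: "{i} = sorbit \<sigma> i0" using assms(2) by (auto simp: sorbits_def)
  then have "i0 = i" using sorbit_refl[of i0 \<sigma>] by (metis singletonD)
  then have "\<sigma> i = i" using sorbit_step[of \<sigma> i0] i0 by (metis singletonD)
  obtain j where j: "\<eta>' = sorbit \<sigma> j" using assms(3) by (auto simp: sorbits_def)
  then have "j = i" using fixed_point_mem_sorbit[OF assms(1) \<open>\<sigma> i = i\<close>] \<open>i \<in> \<eta>'\<close> by simp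
  then show False using assms(4) i0 j \<open>i0 = i\<close> by simp
qed

lemma d1_singleton: "d1 B {i} = cartan_d B i"
  by (simp add: d1_def B1_def cartan_d_def)

lemma a1_singleton:
  assumes "cartan_datum B" and "i \<notin> \<eta>'" and "finite \<eta>'"
    and "\<And>j. j \<in> \<eta>' \<Longrightarrow> cartan_a B i j = a"
  shows "a1 B {i} \<eta>' = int (card \<eta>') * a"
proof -
  have "2 * B1 B {i} \<eta>' = (\<Sum>j\<in>\<eta>'. 2 * B i j)"
    using assms(2) by (auto simp: B1_def sum_distrib_left)
  also have "\<dots> = (\<Sum>j\<in>\<eta>'. a * B i i)"
  proof (rule sum.cong)
    fix j assume "j \<in> \<eta>'"
    then have "i \<noteq> j" using assms(2) by blast
    then show "2 * B i j = a * B i i"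
      using cartan_a_mult_diag[OF assms(1) \<open>i \<noteq> j\<close>] assms(4)[OF \<open>j \<in> \<eta>'\<close>] by simp
  qed simp
  finally have "2 * B1 B {i} \<eta>' = (int (card \<eta>') * a) * B i i"
    by simp
  moreover have "B i i > 0"
    using assms(1) by (simp add: cartan_datum_def)
  ultimately show ?thesis
    by (simp add: a1_def B1_def)
qed

lemma uniform_cartan_a:
  assumes "cartan_datum B" and "i \<notin> \<eta>'" and "\<forall>j\<in>\<eta>'. \<forall>j'\<in>\<eta>'. cartan_a B i j = cartan_a B i j'"
  obtains s :: nat where "\<And>j. j \<in> \<eta>' \<Longrightarrow> cartan_a B i j = - int s"
proof (cases "\<eta>' = {}")
  case False
  then obtain j0 where "j0 \<in> \<eta>'" by blast
  moreover have "i \<noteq> j0"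
    using assms(2) \<open>j0 \<in> \<eta>'\<close> by blast
  ultimately have "cartan_a B i j0 = - int (nat (- cartan_a B i j0))"
    using cartan_a_nonpos[OF assms(1)] by simp
  then show ?thesis
    using that assms(3) \<open>j0 \<in> \<eta>'\<close> by metis
qed blast

section \<open>The Serre ideal\<close>

definition serre_ideal_ncs :: "('i \<Rightarrow> 'i \<Rightarrow> int) \<Rightarrow> 'i nc_series set" where
  "serre_ideal_ncs B = {p. ncs_coeff p \<in> serre_ideal B}"

text \<open>Series need not have finite support, so the Serre ideal is only shown to absorb
  products with polynomials.\<close>

inductive_set ncs_polys :: "'i nc_series set" where
  const: "ncs_const c \<in> ncs_polys"
| word: "ncs_word u \<in> ncs_polys"
| add: "p \<in> ncs_polys \<Longrightarrow> q \<in> ncs_polys \<Longrightarrow> p + q \<in> ncs_polys"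
| mult: "p \<in> ncs_polys \<Longrightarrow> q \<in> ncs_polys \<Longrightarrow> p * q \<in> ncs_polys"

lemma ncs_polys_diff: "p \<in> ncs_polys \<Longrightarrow> q \<in> ncs_polys \<Longrightarrow> p - q \<in> ncs_polys"
  by (metis ncs_polys.add ncs_polys.mult ncs_polys.const ncs.sc_uminus ncs.sc_one
      mult_minus_left mult_1 diff_conv_add_uminus)

lemma prod_list_mem_ncs_polys: "(\<And>x. x \<in> set xs \<Longrightarrow> x \<in> ncs_polys) \<Longrightarrow> prod_list xs \<in> ncs_polys"
  by (induction xs) (auto intro: ncs_polys.mult ncs_polys.const[of 1, unfolded ncs.sc_one])

lemma serre_ideal_ncs_zero: "0 \<in> serre_ideal_ncs B"
  by (simp add: serre_ideal_ncs_def zero_nc_series.rep_eq serre_ideal.zero)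

lemma serre_ideal_ncs_add: "p \<in> serre_ideal_ncs B \<Longrightarrow> q \<in> serre_ideal_ncs B \<Longrightarrow> p + q \<in> serre_ideal_ncs B"
  by (simp add: serre_ideal_ncs_def plus_nc_series.rep_eq serre_ideal.add)

lemma serre_ideal_ncs_const_mult: "p \<in> serre_ideal_ncs B \<Longrightarrow> ncs_const c * p \<in> serre_ideal_ncs B"
  by (simp add: serre_ideal_ncs_def ncs_coeff_const_mult serre_ideal.smult)

lemma serre_ideal_ncs_diff: "p \<in> serre_ideal_ncs B \<Longrightarrow> q \<in> serre_ideal_ncs B \<Longrightarrow> p - q \<in> serre_ideal_ncs B"
  by (metis serre_ideal_ncs_add serre_ideal_ncs_const_mult ncs.sc_uminus ncs.sc_one
      mult_minus_left mult_1 diff_conv_add_uminus)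

lemma poly_mult_mem_serre_ideal_ncs:
  "q \<in> ncs_polys \<Longrightarrow> p \<in> serre_ideal_ncs B \<Longrightarrow> q * p \<in> serre_ideal_ncs B"
proof (induction q arbitrary: p rule: ncs_polys.induct)
  case (word u)
  then show ?case by (simp add: serre_ideal_ncs_def ncs_coeff_word_mult serre_ideal.lmul)
next
  case (add q1 q2)
  then show ?case by (simp add: distrib_right serre_ideal_ncs_add)
next
  case (mult q1 q2)
  then show ?case by (metis mult.assoc)
qed (rule serre_ideal_ncs_const_mult)

lemma mult_poly_mem_serre_ideal_ncs:
  "q \<in> ncs_polys \<Longrightarrow> p \<in> serre_ideal_ncs B \<Longrightarrow> p * q \<in> serre_ideal_ncs B"
proof (induction q arbitrary: p rule: ncs_polys.induct)
  case (const c)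
  then show ?case by (simp add: serre_ideal_ncs_const_mult flip: ncs.sc_central)
next
  case (word u)
  then show ?case by (simp add: serre_ideal_ncs_def ncs_coeff_mult_word serre_ideal.rmul)
next
  case (add q1 q2)
  then show ?case by (simp add: distrib_left serre_ideal_ncs_add)
next
  case (mult q1 q2)
  then show ?case by (metis mult.assoc)
qed

lemma qcomm_iter_mem_ncs_polys:
  "Y \<in> ncs_polys \<Longrightarrow> p \<in> ncs_polys \<Longrightarrow> ncs.qcomm_iter w Y c n p \<in> ncs_polys"
  by (induction n) (auto simp: ncs.qcomm_def intro!: ncs_polys_diff ncs_polys.intros)

lemma qcomm_mem_serre_ideal_ncs:
  assumes "Y \<in> ncs_polys" and "p \<in> serre_ideal_ncs B"
  shows "ncs.qcomm w Y c p \<in> serre_ideal_ncs B"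
proof -
  have "p * Y \<in> serre_ideal_ncs B"
    using assms by (rule mult_poly_mem_serre_ideal_ncs)
  moreover have "ncs_const (w powi c) * Y * p \<in> serre_ideal_ncs B"
    using ncs_polys.mult[OF ncs_polys.const assms(1)] assms(2) by (rule poly_mult_mem_serre_ideal_ncs)
  ultimately show ?thesis
    unfolding ncs.qcomm_def by (rule serre_ideal_ncs_diff)
qed

lemma qcomm_iter_mem_serre_ideal_ncs:
  "Y \<in> ncs_polys \<Longrightarrow> p \<in> serre_ideal_ncs B \<Longrightarrow> ncs.qcomm_iter w Y c n p \<in> serre_ideal_ncs B"
  by (induction n) (simp_all add: qcomm_mem_serre_ideal_ncs)

lemma qcomm_iter_mem_serre_ideal_ncs_mono:
  assumes "Y \<in> ncs_polys" and "ncs.qcomm_iter w Y c n x \<in> serre_ideal_ncs B" and "n \<le> p"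
  shows "ncs.qcomm_iter w Y c p x \<in> serre_ideal_ncs B"
proof -
  obtain t where "p = n + t" using \<open>n \<le> p\<close> by (metis le_add_diff_inverse)
  then show ?thesis
    using qcomm_iter_mem_serre_ideal_ncs[OF assms(1,2)] by (simp add: ncs.qcomm_iter_add)
qed

lemma qcomm_iter_mult_mem_serre_ideal_ncs:
  assumes "w \<noteq> 0" and "Y \<in> ncs_polys" and "x \<in> ncs_polys" and "z \<in> ncs_polys"
    and x_vanish: "\<And>p. p \<ge> s1 + 1 \<Longrightarrow> ncs.qcomm_iter w Y c1 p x \<in> serre_ideal_ncs B"
    and z_vanish: "\<And>p. p \<ge> s2 + 1 \<Longrightarrow> ncs.qcomm_iter w Y c2 p z \<in> serre_ideal_ncs B"
    and "n \<ge> s1 + s2 + 1"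
  shows "ncs.qcomm_iter w Y (c1 + c2) n (x * z) \<in> serre_ideal_ncs B"
proof -
  have "ncs.qcomm_iter w Y c1 a x * ncs.qcomm_iter w Y c2 b z \<in> serre_ideal_ncs B" if "a + b = n" for a b
  proof (cases "a \<ge> s1 + 1")
    case True
    then show ?thesis
      using assms(2,4) by (intro mult_poly_mem_serre_ideal_ncs qcomm_iter_mem_ncs_polys x_vanish)
  next
    case False
    then have "b \<ge> s2 + 1" using that \<open>n \<ge> s1 + s2 + 1\<close> by simp
    then show ?thesis
      using assms(2,3) by (intro poly_mult_mem_serre_ideal_ncs qcomm_iter_mem_ncs_polys z_vanish)
  qed
  then have "ncs.prod_iter_span w Y c1 c2 x z n \<subseteq> serre_ideal_ncs B"
    by (intro ncs.prod_iter_span_subset serre_ideal_ncs_zero serre_ideal_ncs_add serre_ideal_ncs_const_mult)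
  then show ?thesis
    using ncs.qcomm_iter_mult_mem_prod_iter_span[OF assms(1)] by blast
qed

lemma qcomm_iter_prod_list_mem_serre_ideal_ncs:
  assumes "w \<noteq> 0" and "Y \<in> ncs_polys"
  shows "(\<And>x. x \<in> set xs \<Longrightarrow> x \<in> ncs_polys) \<Longrightarrow>
    (\<And>x p. x \<in> set xs \<Longrightarrow> p \<ge> s + 1 \<Longrightarrow> ncs.qcomm_iter w Y c p x \<in> serre_ideal_ncs B) \<Longrightarrow>
    n \<ge> length xs * s + 1 \<Longrightarrow>
    ncs.qcomm_iter w Y (int (length xs) * c) n (prod_list xs) \<in> serre_ideal_ncs B"
proof (induction xs arbitrary: n)
  case Nil
  then show ?case by (simp add: ncs.qcomm_iter_1 serre_ideal_ncs_zero)
next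
  case (Cons x xs)
  have "ncs.qcomm_iter w Y (c + int (length xs) * c) n (x * prod_list xs) \<in> serre_ideal_ncs B"
  proof (rule qcomm_iter_mult_mem_serre_ideal_ncs[OF assms])
    show "ncs.qcomm_iter w Y (int (length xs) * c) p (prod_list xs) \<in> serre_ideal_ncs B"
      if "p \<ge> length xs * s + 1" for p
      using Cons.prems(1,2) that by (intro Cons.IH) auto
  qed (use Cons.prems in \<open>auto intro: prod_list_mem_ncs_polys\<close>)
  then show ?case by (simp add: algebra_simps)
qed

lemma ncs_coeff_qcomm_iter_word:
  assumes "d \<ge> 1" and "c + int n = 1"
  shows "ncs_coeff (ncs.qcomm_iter (qv ^ d) (ncs_word [i]) c n (ncs_word u)) =
    (\<Sum>k = 0..n. smult_ncp ((-1) ^ k * qbinom d n k) (mon (replicate k i @ u @ replicate (n - k) i)))"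
proof -
  have "ncs.qcomm_iter (qv ^ d) (ncs_word [i]) c n (ncs_word u) =
      (\<Sum>k\<le>n. ncs_const (twisted_qbin (qv ^ d) c n k) * (ncs_word [i] ^ k * ncs_word u * ncs_word [i] ^ (n - k)))"
    using qv_neq_0 qnum_qv_power_neq_0[OF assms(1)] by (intro ncs.qcomm_iter_closed_form) auto
  also have "\<dots> = (\<Sum>k\<le>n. ncs_const ((-1) ^ k * qbinom d n k) * ncs_word (replicate k i @ u @ replicate (n - k) i))"
  proof (intro sum.cong refl)
    fix k
    have "twisted_qbin (qv ^ d) c n k = (-1) ^ k * qbinom d n k"
      using assms(2) by (simp add: twisted_qbin_def qbinom_eq_qbin)
    moreover have "ncs_word [i] ^ k * ncs_word u * ncs_word [i] ^ (n - k) = ncs_word (replicate k i @ u @ replicate (n - k) i)"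
      by (simp add: ncs_word_append ncs_word_eq_prod_list[of "replicate _ i"] mult.assoc)
    ultimately show "ncs_const (twisted_qbin (qv ^ d) c n k) * (ncs_word [i] ^ k * ncs_word u * ncs_word [i] ^ (n - k)) =
        ncs_const ((-1) ^ k * qbinom d n k) * ncs_word (replicate k i @ u @ replicate (n - k) i)"
      by simp
  qed
  finally show ?thesis
    by (simp add: ncs_coeff_sum ncs_coeff_const_mult ncs_word.rep_eq atLeast0AtMost)
qed

lemma qcomm_iter_word_mem_serre_ideal_ncs:
  assumes "cartan_datum B" and "i \<noteq> j" and "n \<ge> nat (1 - cartan_a B i j)"
  shows "ncs.qcomm_iter (qv ^ nat (cartan_d B i)) (ncs_word [i]) (cartan_a B i j) n (ncs_word [j])
    \<in> serre_ideal_ncs B"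
proof (rule qcomm_iter_mem_serre_ideal_ncs_mono[OF ncs_polys.word _ assms(3)])
  have "serre_elem B i j = ncs_coeff (ncs.qcomm_iter (qv ^ nat (cartan_d B i)) (ncs_word [i])
      (cartan_a B i j) (nat (1 - cartan_a B i j)) (ncs_word [j]))"
    using cartan_d_ge_1[OF assms(1), of i] cartan_a_nonpos[OF assms(1,2)]
    by (subst ncs_coeff_qcomm_iter_word) (auto simp: serre_elem_def Let_def)
  then show "ncs.qcomm_iter (qv ^ nat (cartan_d B i)) (ncs_word [i]) (cartan_a B i j)
      (nat (1 - cartan_a B i j)) (ncs_word [j]) \<in> serre_ideal_ncs B"
    using serre_ideal.gen[OF assms(2), of B] by (simp add: serre_ideal_ncs_def)
qed

lemma serre_relation_letters:
  assumes "cartan_datum B" and "\<And>j. j \<in> set js \<Longrightarrow> i \<noteq> j \<and> cartan_a B i j = - int s"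
    and "N = length js * s + 1"
  shows "(\<Sum>k = 0..N. smult_ncp ((-1) ^ k * qbinom (nat (cartan_d B i)) N k)
    (mon (replicate k i @ js @ replicate (N - k) i))) \<in> serre_ideal B"
proof -
  define xs where "xs = map (\<lambda>j. ncs_word [j]) js"
  have "ncs.qcomm_iter (qv ^ nat (cartan_d B i)) (ncs_word [i]) (- int s) p x \<in> serre_ideal_ncs B"
    if "x \<in> set xs" and "p \<ge> s + 1" for x p
  proof -
    obtain j where "j \<in> set js" and "x = ncs_word [j]" using \<open>x \<in> set xs\<close> by (auto simp: xs_def)
    then show ?thesis
      using qcomm_iter_word_mem_serre_ideal_ncs[OF assms(1), of i j p] assms(2) \<open>p \<ge> s + 1\<close> by simp
  qed
  then have "ncs.qcomm_iter (qv ^ nat (cartan_d B i)) (ncs_word [i]) (int (length xs) * - int s) N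
      (prod_list xs) \<in> serre_ideal_ncs B"
    using assms(3) by (intro qcomm_iter_prod_list_mem_serre_ideal_ncs) (auto simp: qv_neq_0 xs_def intro: ncs_polys.word)
  then have "ncs.qcomm_iter (qv ^ nat (cartan_d B i)) (ncs_word [i]) (- int (length js * s)) N (ncs_word js)
      \<in> serre_ideal_ncs B"
    by (simp add: xs_def flip: ncs_word_eq_prod_list)
  moreover have "ncs_coeff (ncs.qcomm_iter (qv ^ nat (cartan_d B i)) (ncs_word [i]) (- int (length js * s)) N
      (ncs_word js)) = (\<Sum>k = 0..N. smult_ncp ((-1) ^ k * qbinom (nat (cartan_d B i)) N k)
        (mon (replicate k i @ js @ replicate (N - k) i)))"
    using cartan_d_ge_1[OF assms(1), of i] assms(3) by (intro ncs_coeff_qcomm_iter_word) auto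
  ultimately show ?thesis
    by (simp add: serre_ideal_ncs_def)
qed

theorem proposition5p13:
  fixes B :: "'i::finite \<Rightarrow> 'i \<Rightarrow> int" and \<sigma> :: "'i \<Rightarrow> 'i"
    and \<eta> \<eta>' :: "'i set" and i :: 'i and js :: "'i list"
  assumes "cartan_datum B"
    and "admissible_aut B \<sigma>"
    and "\<eta> \<in> sorbits \<sigma>" and "\<eta>' \<in> sorbits \<sigma>" and "\<eta> \<noteq> \<eta>'"
    and "\<eta> = {i}"
    and "\<forall>j\<in>\<eta>'. cartan_a B i j \<noteq> 0"
    and "\<forall>j\<in>\<eta>'. \<forall>j'\<in>\<eta>'. cartan_a B i j = cartan_a B i j'"
    and "distinct js" and "set js = \<eta>'"
  shows "zero_in_Uminus B
           (\<Sum>k = 0..nat (1 - a1 B \<eta> \<eta>').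
              smult_ncp ((-1) ^ k * qbinom (nat (d1 B \<eta>)) (nat (1 - a1 B \<eta> \<eta>')) k)
                (mon (replicate k i @ js @ replicate (nat (1 - a1 B \<eta> \<eta>') - k) i)))"
proof -
  have "inj \<sigma>" using assms(2) by (simp add: admissible_aut_def bij_is_inj)
  then have "i \<notin> \<eta>'"
    using singleton_sorbit_disjoint assms(3-6) by metis
  then obtain s where s: "\<And>j. j \<in> \<eta>' \<Longrightarrow> cartan_a B i j = - int s"
    using uniform_cartan_a assms(1,8) by blast
  have "card \<eta>' = length js"
    using assms(9,10) distinct_card by blast
  then have "a1 B \<eta> \<eta>' = - int (length js * s)"
    using a1_singleton[OF assms(1) \<open>i \<notin> \<eta>'\<close> _ s] assms(6,10) by simp
  then have "nat (1 - a1 B \<eta> \<eta>') = length js * s + 1" and "nat (d1 B \<eta>) = nat (cartan_d B i)"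
    using assms(6) by (simp_all add: d1_singleton flip: of_nat_mult)
  moreover have "\<And>j. j \<in> set js \<Longrightarrow> i \<noteq> j \<and> cartan_a B i j = - int s"
    using \<open>i \<notin> \<eta>'\<close> s assms(10) by auto
  ultimately show ?thesis
    unfolding zero_in_Uminus_def using serre_relation_letters[OF assms(1)] by simp
qed

end
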